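(* Let $P>0$ and let $H_1\ge H_2\ge 0$ with $H_1>0$. For $\alpha\in[0,1]$ put $$r_1(\alpha)=\log_2(1+\alpha P H_1),\qquad r_2(\alpha)=\log_2\Big(1+\frac{PH_2(1-\alpha)}{\alpha H_2 P+1}\Big).$$ Then the maximum of $\min\{r_1(\alpha),r_2(\alpha)\}$ over $\alpha\in[0,1]$ is attained at $$\alpha^{\star}=\frac{2H_2}{\sqrt{(H_1+H_2)^2+4H_1H_2^2P}+(H_1+H_2)}.$$
   Context: Two-user downlink NOMA: a base station with total transmit power $P$ sends the superposition $\sqrt{\alpha P}s_1+\sqrt{(1-\alpha)P}s_2$, $H_i=|h_i|^2$ is the channel gain to Receiver $i$, and the noise has unit variance. When $H_1\ge H_2$, Receiver 2 decodes $s_2$ treating $s_1$ as noise (rate $r_2(\alpha)$), and Receiver 1 removes $s_2$ by successive interference cancellation and then decodes $s_1$ (rate $r_1(\alpha)$). *)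

theory Defs
  imports Complex_Main
begin

definition noma_r1 :: "real \<Rightarrow> real \<Rightarrow> real \<Rightarrow> real" where
  "noma_r1 P H1 \<alpha> = log 2 (1 + \<alpha> * P * H1)"

definition noma_r2 :: "real \<Rightarrow> real \<Rightarrow> real \<Rightarrow> real" where
  "noma_r2 P H2 \<alpha> = log 2 (1 + P * H2 * (1 - \<alpha>) / (\<alpha> * H2 * P + 1))"

definition noma_alpha_star :: "real \<Rightarrow> real \<Rightarrow> real \<Rightarrow> real" where
  "noma_alpha_star P H1 H2 =
     2 * H2 / (sqrt ((H1 + H2)^2 + 4 * H1 * H2^2 * P) + (H1 + H2))"

end

theory Submission
  imports Defs
begin

text \<open>The rate \<open>r\<^sub>1\<close> increases and \<open>r\<^sub>2\<close> decreases in \<open>\<alpha>\<close>, so the max-min is attained where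
  they cross. Writing \<open>r\<^sub>2(\<alpha>) = log\<^sub>2 ((1 + H\<^sub>2P) / (1 + \<alpha>H\<^sub>2P))\<close>, the crossing condition
  \<open>(1 + \<alpha>PH\<^sub>1)(1 + \<alpha>PH\<^sub>2) = 1 + PH\<^sub>2\<close> is the quadratic \<open>PH\<^sub>1H\<^sub>2\<alpha>\<^sup>2 + (H\<^sub>1 + H\<^sub>2)\<alpha> - H\<^sub>2 = 0\<close>,
  whose nonnegative root, with the numerator rationalised, is \<open>\<alpha>\<^sup>\<star>\<close>.\<close>

lemma min_le_min_at_crossing:
  fixes f g :: "'a::linorder \<Rightarrow> 'b::linorder"
  assumes "\<And>x. x \<in> S \<Longrightarrow> x \<le> a \<Longrightarrow> f x \<le> f a"
    and "\<And>x. x \<in> S \<Longrightarrow> a \<le> x \<Longrightarrow> g x \<le> g a"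
    and "f a = g a" and "x \<in> S"
  shows "min (f x) (g x) \<le> min (f a) (g a)"
  using assms by (cases "x \<le> a") (auto simp: min_le_iff_disj)

lemma noma_r1_mono:
  assumes "0 \<le> x" "x \<le> y" "0 \<le> P" "0 \<le> H1"
  shows "noma_r1 P H1 x \<le> noma_r1 P H1 y"
proof -
  have "0 \<le> x * P * H1" using assms by simp
  moreover have "x * P * H1 \<le> y * P * H1" using assms by (simp add: mult_right_mono)
  ultimately show ?thesis unfolding noma_r1_def by simp
qed

lemma noma_r2_eq_log_ratio:
  assumes "0 \<le> x" "0 \<le> P" "0 \<le> H2"
  shows "noma_r2 P H2 x = log 2 ((1 + H2 * P) / (x * H2 * P + 1))"
proof -
  have "0 < x * H2 * P + 1" using assms by (simp add: add_nonneg_pos)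
  then have "1 + P * H2 * (1 - x) / (x * H2 * P + 1) = (1 + H2 * P) / (x * H2 * P + 1)"
    by (simp add: field_simps)
  then show ?thesis unfolding noma_r2_def by simp
qed

lemma noma_r2_antimono:
  assumes "0 \<le> x" "x \<le> y" "0 \<le> P" "0 \<le> H2"
  shows "noma_r2 P H2 y \<le> noma_r2 P H2 x"
proof -
  have dx: "0 < x * H2 * P + 1" and "0 \<le> H2 * P" using assms by (simp_all add: add_nonneg_pos)
  moreover have "x * H2 * P \<le> y * H2 * P" using assms by (simp add: mult_right_mono)
  ultimately have "(1 + H2 * P) / (y * H2 * P + 1) \<le> (1 + H2 * P) / (x * H2 * P + 1)"
    and "0 < (1 + H2 * P) / (y * H2 * P + 1)"
    by (auto intro!: divide_left_mono divide_pos_pos)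
  then show ?thesis
    using assms by (simp add: noma_r2_eq_log_ratio)
qed

lemma noma_alpha_star_bounds:
  assumes "0 \<le> P" "0 \<le> H2" "0 < H1"
  shows "0 \<le> noma_alpha_star P H1 H2" "noma_alpha_star P H1 H2 \<le> 1"
proof -
  define S where "S = H1 + H2"
  define s where "s = sqrt (S\<^sup>2 + 4 * H1 * H2\<^sup>2 * P)"
  have "S \<le> s" unfolding s_def
    by (rule real_le_rsqrt) (use assms in simp)
  moreover have "0 < S" "H2 \<le> S" using assms by (simp_all add: S_def)
  moreover have "noma_alpha_star P H1 H2 = 2 * H2 / (s + S)"
    by (simp add: noma_alpha_star_def s_def S_def)
  ultimately show "0 \<le> noma_alpha_star P H1 H2" "noma_alpha_star P H1 H2 \<le> 1"
    using assms by (simp_all add: divide_le_eq)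
qed

lemma noma_alpha_star_root:
  assumes "0 \<le> P" "0 \<le> H2" "0 < H1"
  defines "a \<equiv> noma_alpha_star P H1 H2"
  shows "P * H1 * H2 * a\<^sup>2 + (H1 + H2) * a - H2 = 0"
proof -
  define S where "S = H1 + H2"
  define s where "s = sqrt (S\<^sup>2 + 4 * H1 * H2\<^sup>2 * P)"
  have s2: "s\<^sup>2 = S\<^sup>2 + 4 * H1 * H2\<^sup>2 * P"
    unfolding s_def using assms by simp
  have "S \<le> s" unfolding s_def
    by (rule real_le_rsqrt) (use assms in simp)
  then have pos: "0 < s + S" using assms by (simp add: S_def)
  then have a_s: "a * (s + S) = 2 * H2"
    by (simp add: a_def noma_alpha_star_def s_def S_def)
  have "(P * H1 * H2 * a\<^sup>2 + S * a - H2) * (s + S)\<^sup>2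
      = P * H1 * H2 * (a * (s + S))\<^sup>2 + S * (a * (s + S)) * (s + S) - H2 * (s + S)\<^sup>2"
    by (simp add: algebra_simps power2_eq_square)
  also have "\<dots> = H2 * (4 * P * H1 * H2\<^sup>2 + S\<^sup>2 - s\<^sup>2)"
    unfolding a_s by (simp add: algebra_simps power2_eq_square)
  also have "\<dots> = 0" using s2 by simp
  finally show ?thesis using pos by (simp add: S_def)
qed

lemma noma_rates_cross_at_alpha_star:
  assumes "0 \<le> P" "0 \<le> H2" "0 < H1"
  defines "a \<equiv> noma_alpha_star P H1 H2"
  shows "noma_r1 P H1 a = noma_r2 P H2 a"
proof -
  have a0: "0 \<le> a" using noma_alpha_star_bounds[OF assms(1-3)] by (simp add: a_def)
  have "P * (P * H1 * H2 * a\<^sup>2 + (H1 + H2) * a - H2) = 0"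
    using noma_alpha_star_root[OF assms(1-3)] by (simp add: a_def)
  then have "(1 + a * P * H1) * (a * H2 * P + 1) = 1 + H2 * P"
    by (simp add: algebra_simps power2_eq_square)
  moreover have "0 < a * H2 * P + 1" using a0 assms by (simp add: add_nonneg_pos)
  ultimately have "(1 + H2 * P) / (a * H2 * P + 1) = 1 + a * P * H1"
    by (simp add: divide_eq_eq)
  then show ?thesis
    using a0 assms by (simp add: noma_r2_eq_log_ratio noma_r1_def)
qed

theorem theorem1:
  fixes P H1 H2 :: real
  assumes "P > 0" and "H1 \<ge> H2" and "H2 \<ge> 0" and "H1 > 0"
  shows "noma_alpha_star P H1 H2 \<in> {0..1} \<and>
         (\<forall>\<alpha>\<in>{0..1}. min (noma_r1 P H1 \<alpha>) (noma_r2 P H2 \<alpha>)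
            \<le> min (noma_r1 P H1 (noma_alpha_star P H1 H2)) (noma_r2 P H2 (noma_alpha_star P H1 H2)))"
proof -
  \<comment> \<open>\<open>H2 \<le> H1\<close> only justifies the decoding order of the model; the optimum does not need it.\<close>
  have P: "0 \<le> P" using assms by simp
  note bounds = noma_alpha_star_bounds[OF P assms(3,4)]
  have "min (noma_r1 P H1 x) (noma_r2 P H2 x)
      \<le> min (noma_r1 P H1 (noma_alpha_star P H1 H2)) (noma_r2 P H2 (noma_alpha_star P H1 H2))"
    if "x \<in> {0..1}" for x
  proof (rule min_le_min_at_crossing[OF _ _ _ that])
    show "noma_r1 P H1 y \<le> noma_r1 P H1 (noma_alpha_star P H1 H2)"
      if "y \<in> {0..1}" "y \<le> noma_alpha_star P H1 H2" for y
      using that assms by (intro noma_r1_mono) auto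
    show "noma_r2 P H2 y \<le> noma_r2 P H2 (noma_alpha_star P H1 H2)"
      if "noma_alpha_star P H1 H2 \<le> y" for y
      using that bounds assms by (intro noma_r2_antimono) auto
    show "noma_r1 P H1 (noma_alpha_star P H1 H2) = noma_r2 P H2 (noma_alpha_star P H1 H2)"
      using noma_rates_cross_at_alpha_star[OF P assms(3,4)] .
  qed
  with bounds show ?thesis by simp
qed

end
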